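(* Let $\mathbb K$ be a field, $0\ne t\in\mathbb K$, $\kappa\in\mathbb Z^\ell$ with $\kappa_l-\kappa_{l+1}\ge n$, $(\mathbb K,t)$ separating $\mathrm{Std}(\mathcal P_n)$, and let $\{f_{\mathfrak s\mathfrak t}\}$ be a $*$-seminormal basis of $\mathscr H_n(\mathbb K)$ with associated seminormal coefficient system $\alpha$ (so $f_{\mathfrak s\mathfrak t}T_r=\alpha_r(\mathfrak t)f_{\mathfrak s,\mathfrak t(r,r+1)}-[\rho_r(\mathfrak t)]^{-1}f_{\mathfrak s\mathfrak t}$) and scalars $\gamma_{\mathfrak t}$ with $f_{\mathfrak s\mathfrak t}f_{\mathfrak u\mathfrak v}=\delta_{\mathfrak t\mathfrak u}\gamma_{\mathfrak t}f_{\mathfrak s\mathfrak v}$. If $\mathfrak t\in\mathrm{Std}(\mathcal P_n)$, $1\le r<n$, and $\mathfrak v=\mathfrak t(r,r+1)$ is standard, then $\alpha_r(\mathfrak v)\gamma_{\mathfrak t}=\alpha_r(\mathfrak t)\gamma_{\mathfrak v}$.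
   Context: Quantum integers $[d]=[d]_t$. $\mathscr H_n(\mathbb K)=\mathscr H_n(\mathbb K,t,\kappa)$: generators $L_1..L_n,T_1..T_{n-1}$, relations $\prod_l(L_1-[\kappa_l])=0$, $(T_r+1)(T_r-t)=0$, $L_rL_s=L_sL_r$, $T_rT_s=T_sT_r$ ($|r-s|>1$), $T_sT_{s+1}T_s=T_{s+1}T_sT_{s+1}$, $T_rL_s=L_sT_r$ ($s\ne r,r+1$), $L_{r+1}(T_r-t+1)=T_rL_r+1$; $*$ the anti-involution fixing all generators. Separation: $[n]^!\prod_{l<m}\prod_{-n<d<n}[\kappa_l-\kappa_m+d]\ne0$. Content of $(l,r,c)$ is $\kappa_l-r+c$; $c_k(\mathfrak t)$ the content of $k$ in $\mathfrak t$; $\rho_r(\mathfrak t)=c_r(\mathfrak t)-c_{r+1}(\mathfrak t)$; $f_{\mathfrak s,\mathfrak w}=0$ if $\mathfrak w$ is not standard. A $*$-seminormal basis is a basis $\{f_{\mathfrak s\mathfrak t}\}$ indexed by pairs of standard tableaux of the same shape with $L_rf_{\mathfrak s\mathfrak t}=[c_r(\mathfrak s)]f_{\mathfrak s\mathfrak t}$, $f_{\mathfrak s\mathfrak t}L_r=[c_r(\mathfrak t)]f_{\mathfrak s\mathfrak t}$ and $f_{\mathfrak s\mathfrak t}^*=f_{\mathfrak t\mathfrak s}$; for such a basis there exist unique scalars $\alpha_r(\mathfrak t)$ and non-zero scalars $\gamma_{\mathfrak t}$ with the stated properties. *)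

theory Defs
  imports Main
begin

text \<open>Nodes (l,r,c): component l, row r, column c (all indices start at 1).
  A tableau with n entries is represented by its position map: k \<mapsto> node containing k,
  for k in {1..n}; outside {1..n} it is normalised to (0,0,0).\<close>

type_synonym node = "nat \<times> nat \<times> nat"
type_synonym tableau = "nat \<Rightarrow> node"

definition qint :: "'k::field \<Rightarrow> int \<Rightarrow> 'k" where
  "qint t d = (if t = 1 then of_int d else (t powi d - 1) / (t - 1))"

definition qfact :: "'k::field \<Rightarrow> nat \<Rightarrow> 'k" where
  "qfact t n = (\<Prod>k\<in>{1..n}. qint t (int k))"

definition separating :: "'k::field \<Rightarrow> nat \<Rightarrow> (nat \<Rightarrow> int) \<Rightarrow> nat \<Rightarrow> bool" where
  "separating t ell \<kappa> n \<longleftrightarrow>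
     qfact t n * (\<Prod>l\<in>{1..ell}. \<Prod>m\<in>{l<..ell}. \<Prod>d\<in>{-int n<..<int n}. qint t (\<kappa> l - \<kappa> m + d)) \<noteq> 0"

definition mp_diagram :: "nat \<Rightarrow> nat \<Rightarrow> node set \<Rightarrow> bool" where
  "mp_diagram ell n D \<longleftrightarrow> finite D \<and> card D = n \<and>
     (\<forall>l r c. (l,r,c) \<in> D \<longrightarrow> 1 \<le> l \<and> l \<le> ell \<and> 1 \<le> r \<and> 1 \<le> c) \<and>
     (\<forall>l r c. (l,r,c) \<in> D \<longrightarrow> (1 < r \<longrightarrow> (l,r-1,c) \<in> D) \<and> (1 < c \<longrightarrow> (l,r,c-1) \<in> D))"

definition shape :: "nat \<Rightarrow> tableau \<Rightarrow> node set" where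
  "shape n t = t ` {1..n}"

definition std_tableau :: "nat \<Rightarrow> nat \<Rightarrow> tableau \<Rightarrow> bool" where
  "std_tableau ell n t \<longleftrightarrow> mp_diagram ell n (shape n t) \<and> inj_on t {1..n} \<and>
     (\<forall>k. k \<notin> {1..n} \<longrightarrow> t k = (0,0,0)) \<and>
     (\<forall>i\<in>{1..n}. \<forall>j\<in>{1..n}. \<forall>l r c.
        t i = (l,r,c) \<and> (t j = (l,r,Suc c) \<or> t j = (l,Suc r,c)) \<longrightarrow> i < j)"

definition std_pairs :: "nat \<Rightarrow> nat \<Rightarrow> (tableau \<times> tableau) set" where
  "std_pairs ell n = {(s,u). std_tableau ell n s \<and> std_tableau ell n u \<and> shape n s = shape n u}"

definition content :: "(nat \<Rightarrow> int) \<Rightarrow> tableau \<Rightarrow> nat \<Rightarrow> int" where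
  "content \<kappa> t k = (case t k of (l,r,c) \<Rightarrow> \<kappa> l - int r + int c)"

definition rho :: "(nat \<Rightarrow> int) \<Rightarrow> tableau \<Rightarrow> nat \<Rightarrow> int" where
  "rho \<kappa> t r = content \<kappa> t r - content \<kappa> t (Suc r)"

definition tswap :: "nat \<Rightarrow> tableau \<Rightarrow> tableau" where
  "tswap r t = t(r := t (Suc r), Suc r := t r)"

text \<open>A K-algebra: a ring with a central unital ring homomorphism from the field K;
  scalar multiplication is c\<cdot>x = ofK c * x.\<close>
definition K_algebra :: "('k::field \<Rightarrow> 'a::ring_1) \<Rightarrow> bool" where
  "K_algebra ofK \<longleftrightarrow> (\<forall>a b. ofK (a + b) = ofK a + ofK b) \<and> (\<forall>a b. ofK (a * b) = ofK a * ofK b) \<and>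
     ofK 1 = 1 \<and> (\<forall>c x. ofK c * x = x * ofK c)"

definition hecke_relations :: "('k::field \<Rightarrow> 'a::ring_1) \<Rightarrow> 'k \<Rightarrow> nat \<Rightarrow> (nat \<Rightarrow> int) \<Rightarrow> nat
     \<Rightarrow> (nat \<Rightarrow> 'a) \<Rightarrow> (nat \<Rightarrow> 'a) \<Rightarrow> bool" where
  "hecke_relations ofK t ell \<kappa> n L T \<longleftrightarrow>
     prod_list (map (\<lambda>l. L 1 - ofK (qint t (\<kappa> l))) [1..<Suc ell]) = 0 \<and>
     (\<forall>r\<in>{1..<n}. (T r + 1) * (T r - ofK t) = 0) \<and>
     (\<forall>r\<in>{1..n}. \<forall>s\<in>{1..n}. L r * L s = L s * L r) \<and>
     (\<forall>r\<in>{1..<n}. \<forall>s\<in>{1..<n}. (r + 1 < s \<or> s + 1 < r) \<longrightarrow> T r * T s = T s * T r) \<and>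
     (\<forall>s. 1 \<le> s \<and> s + 1 < n \<longrightarrow> T s * T (s+1) * T s = T (s+1) * T s * T (s+1)) \<and>
     (\<forall>r\<in>{1..<n}. \<forall>s\<in>{1..n}. s \<noteq> r \<and> s \<noteq> r + 1 \<longrightarrow> T r * L s = L s * T r) \<and>
     (\<forall>r\<in>{1..<n}. L (r+1) * (T r - ofK t + 1) = T r * L r + 1)"

inductive_set gen_subalg :: "('k::field \<Rightarrow> 'a::ring_1) \<Rightarrow> (nat \<Rightarrow> 'a) \<Rightarrow> (nat \<Rightarrow> 'a) \<Rightarrow> nat \<Rightarrow> 'a set"
  for ofK L T n where
  scalar: "ofK c \<in> gen_subalg ofK L T n"
| genL: "r \<in> {1..n} \<Longrightarrow> L r \<in> gen_subalg ofK L T n"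
| genT: "r \<in> {1..<n} \<Longrightarrow> T r \<in> gen_subalg ofK L T n"
| add: "x \<in> gen_subalg ofK L T n \<Longrightarrow> y \<in> gen_subalg ofK L T n \<Longrightarrow> x + y \<in> gen_subalg ofK L T n"
| mult: "x \<in> gen_subalg ofK L T n \<Longrightarrow> y \<in> gen_subalg ofK L T n \<Longrightarrow> x * y \<in> gen_subalg ofK L T n"

definition anti_involution :: "('k::field \<Rightarrow> 'a::ring_1) \<Rightarrow> (nat \<Rightarrow> 'a) \<Rightarrow> (nat \<Rightarrow> 'a) \<Rightarrow> nat \<Rightarrow> ('a \<Rightarrow> 'a) \<Rightarrow> bool" where
  "anti_involution ofK L T n star \<longleftrightarrow>
     (\<forall>x y. star (x + y) = star x + star y) \<and> (\<forall>x y. star (x * y) = star y * star x) \<and>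
     (\<forall>c. star (ofK c) = ofK c) \<and> (\<forall>x. star (star x) = x) \<and>
     (\<forall>r\<in>{1..n}. star (L r) = L r) \<and> (\<forall>r\<in>{1..<n}. star (T r) = T r)"

definition is_K_basis :: "('k::field \<Rightarrow> 'a::ring_1) \<Rightarrow> 'i set \<Rightarrow> ('i \<Rightarrow> 'a) \<Rightarrow> bool" where
  "is_K_basis ofK I b \<longleftrightarrow> finite I \<and>
     (\<forall>x. \<exists>c. x = (\<Sum>p\<in>I. ofK (c p) * b p)) \<and>
     (\<forall>c. (\<Sum>p\<in>I. ofK (c p) * b p) = 0 \<longrightarrow> (\<forall>p\<in>I. c p = 0))"

definition star_seminormal_basis :: "('k::field \<Rightarrow> 'a::ring_1) \<Rightarrow> 'k \<Rightarrow> nat \<Rightarrow> (nat \<Rightarrow> int) \<Rightarrow> nat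
     \<Rightarrow> (nat \<Rightarrow> 'a) \<Rightarrow> ('a \<Rightarrow> 'a) \<Rightarrow> (tableau \<Rightarrow> tableau \<Rightarrow> 'a) \<Rightarrow> bool" where
  "star_seminormal_basis ofK t ell \<kappa> n L star f \<longleftrightarrow>
     is_K_basis ofK (std_pairs ell n) (\<lambda>(s,u). f s u) \<and>
     (\<forall>s w. \<not> std_tableau ell n w \<longrightarrow> f s w = 0) \<and>
     (\<forall>(s,u)\<in>std_pairs ell n. \<forall>r\<in>{1..n}.
        L r * f s u = ofK (qint t (content \<kappa> s r)) * f s u \<and>
        f s u * L r = ofK (qint t (content \<kappa> u r)) * f s u) \<and>
     (\<forall>(s,u)\<in>std_pairs ell n. star (f s u) = f u s)"

end

theory Submission
  imports Defs
begin

text \<open>Write \<open>v = t(r,r+1)\<close>. The product \<open>f\<^sub>t\<^sub>t T\<^sub>r f\<^sub>v\<^sub>t\<close> can be evaluated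
  by letting \<open>T\<^sub>r\<close> act on the left factor, which gives \<open>\<alpha>\<^sub>r(t) \<gamma>\<^sub>v f\<^sub>t\<^sub>t\<close>, or on the right
  factor, where the action is the \<open>*\<close>-image of the right action on \<open>f\<^sub>t\<^sub>v\<close> and gives
  \<open>\<alpha>\<^sub>r(v) \<gamma>\<^sub>t f\<^sub>t\<^sub>t\<close>. Comparing coefficients of the basis element \<open>f\<^sub>t\<^sub>t\<close> proves the claim.\<close>

lemma tswap_tswap [simp]: "tswap r (tswap r t) = t"
  unfolding tswap_def by auto

lemma tswap_neq:
  assumes "inj_on t {1..n}" and "1 \<le> r" and "r < n"
  shows "tswap r t \<noteq> t"
proof
  assume "tswap r t = t"
  moreover have "tswap r t r = t (Suc r)"
    unfolding tswap_def by simp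
  ultimately have "t r = t (Suc r)"
    by simp
  moreover have "r \<in> {1..n}" "Suc r \<in> {1..n}"
    using assms(2,3) by auto
  ultimately show False
    using assms(1) unfolding inj_on_def by (metis n_not_Suc_n)
qed

lemma shape_tswap:
  assumes "1 \<le> r" and "r < n"
  shows "shape n (tswap r t) = shape n t"
proof -
  define \<sigma> where "\<sigma> k = (if k = r then Suc r else if k = Suc r then r else k)" for k
  have "tswap r t = t \<circ> \<sigma>"
    unfolding tswap_def \<sigma>_def by auto
  have \<sigma>_\<sigma>: "\<sigma> (\<sigma> k) = k" for k
    by (simp add: \<sigma>_def)
  have \<sigma>_into: "\<sigma> k \<in> {1..n}" if "k \<in> {1..n}" for k
    using assms that by (simp add: \<sigma>_def)
  have \<sigma>_image: "\<sigma> ` {1..n} = {1..n}"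
  proof
    show "\<sigma> ` {1..n} \<subseteq> {1..n}"
      using \<sigma>_into by blast
    show "{1..n} \<subseteq> \<sigma> ` {1..n}"
      using \<sigma>_into \<sigma>_\<sigma> by (metis image_eqI subsetI)
  qed
  have "shape n (tswap r t) = t ` \<sigma> ` {1..n}"
    unfolding shape_def \<open>tswap r t = t \<circ> \<sigma>\<close> by (simp only: image_comp)
  also have "\<dots> = shape n t"
    unfolding shape_def \<sigma>_image ..
  finally show ?thesis .
qed

lemma K_algebra_of_diff:
  assumes "K_algebra ofK"
  shows "ofK (a - b) = ofK a - ofK b"
  using assms unfolding K_algebra_def by (metis add_diff_cancel diff_add_cancel)

lemma anti_involution_scalar_mult:
  assumes "K_algebra ofK" and "anti_involution ofK L T n star"
  shows "star (ofK a * x) = ofK a * star x"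
  using assms unfolding K_algebra_def anti_involution_def by metis

lemma anti_involution_diff:
  assumes "anti_involution ofK L T n star"
  shows "star (x - y) = star x - star y"
  using assms unfolding anti_involution_def by (metis add_diff_cancel diff_add_cancel)

lemma is_K_basis_coeff_eq:
  assumes basis: "is_K_basis ofK I b" and alg: "K_algebra ofK" and "p \<in> I"
    and eq: "ofK c * b p = ofK d * b p"
  shows "c = d"
proof -
  define coeff where "coeff q = (if q = p then c - d else 0)" for q
  have of0: "ofK 0 = 0"
    using K_algebra_of_diff[OF alg, of 0 0] by simp
  have "(\<Sum>q\<in>I. ofK (coeff q) * b q) = ofK (c - d) * b p"
    using basis \<open>p \<in> I\<close> unfolding is_K_basis_def
    by (subst sum.remove[of I p]) (auto simp: coeff_def of0 intro!: sum.neutral)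
  also have "\<dots> = 0"
    using eq by (simp add: K_algebra_of_diff[OF alg] left_diff_distrib)
  finally have "coeff p = 0"
    using basis \<open>p \<in> I\<close> unfolding is_K_basis_def by blast
  then show ?thesis
    by (simp add: coeff_def)
qed

text \<open>Here \<open>x = f\<^sub>t\<^sub>t\<close>, \<open>y = f\<^sub>t\<^sub>v\<close>, \<open>z = f\<^sub>v\<^sub>t\<close> and \<open>h = T\<^sub>r\<close>.\<close>

lemma sandwich_two_ways:
  assumes alg: "K_algebra ofK" and inv: "anti_involution ofK L T n star"
    and h: "star h = h"
    and xh: "x * h = ofK a * y - ofK c * x" and yh: "y * h = ofK b * x - ofK c' * y"
    and "star x = x" and "star y = z"
    and yz: "y * z = ofK g' * x" and xz: "x * z = 0" and xx: "x * x = ofK g * x"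
  shows "ofK (a * g') * x = ofK (b * g) * x"
proof -
  have of_mult: "ofK (p * q) = ofK p * ofK q" and of_comm: "ofK p * w = w * ofK p" for p q w
    using alg unfolding K_algebra_def by blast+
  have star_mult: "star (u * w) = star w * star u" for u w
    using inv unfolding anti_involution_def by blast
  have hz: "h * z = ofK b * x - ofK c' * z"
  proof -
    have "h * z = star (y * h)"
      using h \<open>star y = z\<close> by (simp add: star_mult)
    also have "\<dots> = ofK b * x - ofK c' * z"
      unfolding yh anti_involution_diff[OF inv] anti_involution_scalar_mult[OF alg inv]
      using \<open>star x = x\<close> \<open>star y = z\<close> by simp
    finally show ?thesis .
  qed
  have "x * h * z = ofK (a * g') * x"
    by (simp add: xh yz xz left_diff_distrib mult.assoc of_mult)
  moreover have "x * (h * z) = ofK (b * g) * x"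
  proof -
    have "x * (h * z) = (x * ofK b) * x - (x * ofK c') * z"
      by (simp only: hz right_diff_distrib flip: mult.assoc)
    also have "\<dots> = ofK b * (x * x) - ofK c' * (x * z)"
      by (simp only: mult.assoc flip: of_comm[of b x] of_comm[of c' x])
    also have "\<dots> = ofK (b * g) * x"
      by (simp add: xx xz of_mult mult.assoc)
    finally show ?thesis .
  qed
  ultimately show ?thesis
    by (simp add: mult.assoc)
qed

theorem corollary3p10:
  fixes ofK :: "'k::field \<Rightarrow> 'a::ring_1" and t :: 'k and ell n :: nat and \<kappa> :: "nat \<Rightarrow> int"
    and L T :: "nat \<Rightarrow> 'a" and star :: "'a \<Rightarrow> 'a" and f :: "tableau \<Rightarrow> tableau \<Rightarrow> 'a"
    and \<alpha> :: "nat \<Rightarrow> tableau \<Rightarrow> 'k" and \<gamma> :: "tableau \<Rightarrow> 'k"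
    and tt :: tableau and r :: nat
  assumes "t \<noteq> 0" and "1 \<le> ell"
    and "\<forall>l. 1 \<le> l \<and> l < ell \<longrightarrow> \<kappa> l - \<kappa> (l + 1) \<ge> int n"
    and "separating t ell \<kappa> n"
    and "K_algebra ofK"
    and "hecke_relations ofK t ell \<kappa> n L T"
    and "\<forall>x. x \<in> gen_subalg ofK L T n"
    and "anti_involution ofK L T n star"
    and "star_seminormal_basis ofK t ell \<kappa> n L star f"
    and alpha: "\<forall>(s,u)\<in>std_pairs ell n. \<forall>q\<in>{1..<n}.
        f s u * T q = ofK (\<alpha> q u) * f s (tswap q u) - ofK (inverse (qint t (rho \<kappa> u q))) * f s u"
    and gamma: "\<forall>(s,u)\<in>std_pairs ell n. \<forall>(x,v)\<in>std_pairs ell n.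
        f s u * f x v = (if u = x then ofK (\<gamma> u) * f s v else 0)"
    and "std_tableau ell n tt" and "1 \<le> r" and "r < n"
    and "std_tableau ell n (tswap r tt)"
  shows "\<alpha> r (tswap r tt) * \<gamma> tt = \<alpha> r tt * \<gamma> (tswap r tt)"
proof -
  define v where "v = tswap r tt"
  have pairs: "(tt,tt) \<in> std_pairs ell n" "(tt,v) \<in> std_pairs ell n" "(v,tt) \<in> std_pairs ell n"
    using assms(12-15) shape_tswap[of r n tt] unfolding std_pairs_def v_def by auto
  have "inj_on tt {1..n}"
    using assms(12) unfolding std_tableau_def by blast
  then have "tt \<noteq> v"
    using tswap_neq assms(13,14) unfolding v_def by metis
  have basis: "is_K_basis ofK (std_pairs ell n) (\<lambda>(s,u). f s u)"
    and star_f: "\<forall>(s,u)\<in>std_pairs ell n. star (f s u) = f u s"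
    using assms(9) unfolding star_seminormal_basis_def by blast+
  have star_fs: "star (f tt tt) = f tt tt" "star (f tt v) = f v tt"
    using star_f pairs(1,2) by auto
  have star_T: "star (T r) = T r"
    using assms(8,13,14) unfolding anti_involution_def by simp
  have act: "f tt tt * T r = ofK (\<alpha> r tt) * f tt v - ofK (inverse (qint t (rho \<kappa> tt r))) * f tt tt"
    "f tt v * T r = ofK (\<alpha> r v) * f tt tt - ofK (inverse (qint t (rho \<kappa> v r))) * f tt v"
    using alpha pairs assms(13,14) unfolding v_def by fastforce+
  have mult: "f tt v * f v tt = ofK (\<gamma> v) * f tt tt" "f tt tt * f v tt = 0"
    "f tt tt * f tt tt = ofK (\<gamma> tt) * f tt tt"
    using gamma pairs \<open>tt \<noteq> v\<close> by fastforce+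
  have "\<alpha> r tt * \<gamma> v = \<alpha> r v * \<gamma> tt"
  proof (rule is_K_basis_coeff_eq[OF basis assms(5) pairs(1)])
    show "ofK (\<alpha> r tt * \<gamma> v) * (\<lambda>(s,u). f s u) (tt,tt) = ofK (\<alpha> r v * \<gamma> tt) * (\<lambda>(s,u). f s u) (tt,tt)"
      using sandwich_two_ways[OF assms(5,8) star_T act star_fs mult] by simp
  qed
  then show ?thesis
    unfolding v_def by simp
qed

end
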